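(* Consider the Public WOM model described in the context. Every solution $(p_2^*,\underline{k}^* )$ of the seller's problem $$\max_{p_2\in[0,1],\ \underline{k}}\ \pi(p_2,\underline{k})=(1-\beta)+\beta\left(p_2-\frac{c}{\underline{k}\,\phi(L(\underline{k}),p_2)}\right)(1-p_2)\,\Gamma(L(\underline{k}))$$ satisfies $p_2^*=1/2$, the corresponding bonus is $b=\dfrac{c}{\underline{k}^*\,\phi(L(\underline{k}^* ),p_2^* )}$, and $$\underline{k}^*\in\arg\max_{\underline{k}}\left[\frac{\Gamma(L(\underline{k}))}{4}-\frac{c\,\Gamma(L(\underline{k}))}{2\,\underline{k}\,\phi(L(\underline{k}),1/2)}\right].$$
   Context: A seller (zero marginal cost) faces a unit mass of consumers, each demanding at most one unit. A fraction $1-\beta\in(0,1)$ is informed about the product and has reservation value $1$ (they are charged price $p_1=1$); the fraction $\beta$ is uninformed, with reservation value $v\sim U[0,1]$, and is charged price $p_2$, so an informed-by-referral consumer buys with probability $1-p_2$. Informed consumers are linked to uninformed ones by a directed bipartite network: out-degrees of informed consumers follow a probability distribution $f$ on the positive integers, in-degrees of uninformed consumers follow a distribution $g$, with $(1-\beta)\sum_k k f(k)=\beta\sum_k k g(k)$. If a fraction $L\in[0,1]$ of links carries information, the fraction of uninformed consumers who receive it is $\Gamma(L)=1-\sum_{k} g(k)(1-L)^k$, and the expected value, per unit of bonus, that an informed consumer gets from passing information along one link is $\phi(L,p_2)=(1-p_2)\sum_k g(k)\frac{1-(1-L)^k}{kL}$. The seller pays a bonus $b$ per successful referral. Public WOM: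 an informed consumer with out-degree $k$ can inform all her out-neighbours at a lump-sum cost $c>0$, and does so iff $k\,b\,\phi(L,p_2)\ge c$; hence there is a degree cutoff $\underline{k}$, the fraction of active links is $L(\underline{k})=\sum_{k\ge\underline{k}}f(k)$, and the bonus implementing cutoff $\underline{k}$ is $b=c/(\underline{k}\,\phi(L(\underline{k}),p_2))$, so the seller's problem reduces to choosing $(p_2,\underline{k})$ as in the claim. *)

theory Defs
  imports Complex_Main
begin

definition is_degree_dist :: "(nat \<Rightarrow> real) \<Rightarrow> bool" where
  "is_degree_dist h \<longleftrightarrow> (\<forall>k. 0 \<le> h k) \<and> h 0 = 0 \<and> h sums 1"

text \<open>Fraction of uninformed consumers reached when a fraction L of links is active.\<close>
definition Gamma :: "(nat \<Rightarrow> real) \<Rightarrow> real \<Rightarrow> real" where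
  "Gamma g L = 1 - (\<Sum>k. g k * (1 - L) ^ k)"

text \<open>Expected value per unit of bonus of passing information along one link.\<close>
definition phi :: "(nat \<Rightarrow> real) \<Rightarrow> real \<Rightarrow> real \<Rightarrow> real" where
  "phi g L p2 = (1 - p2) * (\<Sum>k. g k * (1 - (1 - L) ^ k) / (real k * L))"

text \<open>Fraction of active links under degree cutoff kk.\<close>
definition Lcut :: "(nat \<Rightarrow> real) \<Rightarrow> nat \<Rightarrow> real" where
  "Lcut f kk = (\<Sum>k. if kk \<le> k then f k else 0)"

definition bonus :: "real \<Rightarrow> (nat \<Rightarrow> real) \<Rightarrow> (nat \<Rightarrow> real) \<Rightarrow> real \<Rightarrow> nat \<Rightarrow> real" where
  "bonus c f g p2 kk = c / (real kk * phi g (Lcut f kk) p2)"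

definition profit :: "real \<Rightarrow> real \<Rightarrow> (nat \<Rightarrow> real) \<Rightarrow> (nat \<Rightarrow> real) \<Rightarrow> real \<Rightarrow> nat \<Rightarrow> real" where
  "profit beta c f g p2 kk =
     (1 - beta) + beta * (p2 - c / (real kk * phi g (Lcut f kk) p2)) * (1 - p2) * Gamma g (Lcut f kk)"

text \<open>Feasible choices: price in [0,1], cutoff a positive integer, and the implementing
bonus c/(kk * phi) well defined (phi > 0, i.e. the denominator is nonzero).\<close>
definition feasible :: "(nat \<Rightarrow> real) \<Rightarrow> (nat \<Rightarrow> real) \<Rightarrow> real \<Rightarrow> nat \<Rightarrow> bool" where
  "feasible f g p2 kk \<longleftrightarrow> 0 \<le> p2 \<and> p2 \<le> 1 \<and> 1 \<le> kk \<and> 0 < phi g (Lcut f kk) p2"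

end

theory Submission
  imports Defs
begin

text \<open>The price enters the per-link value only through the factor \<open>1 - p2\<close>, so
  \<open>phi g L p2 = (1 - p2) * phi g L 0\<close>, and the expected bonus paid per reached consumer,
  \<open>(1 - p2) c / (k phi g L p2)\<close>, does not depend on \<open>p2\<close>. The profit is therefore
  \<open>(1 - beta) + beta \<Gamma> (p2 (1 - p2) - c / (k phi g L 0))\<close>; since \<open>\<Gamma> > 0\<close> at every
  feasible cutoff, the price \<open>1/2\<close> is strictly best for each cutoff, and the optimal
  cutoff maximises the profit at that price.\<close>

lemma Lcut_bounds:
  assumes "is_degree_dist f"
  shows "0 \<le> Lcut f kk" and "Lcut f kk \<le> 1"
proof -
  have f: "summable f" "suminf f = 1" "\<And>k. 0 \<le> f k"
    using assms unfolding is_degree_dist_def sums_iff by auto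
  have tail: "summable (\<lambda>k. if kk \<le> k then f k else 0)"
    by (rule summable_comparison_test'[OF f(1)]) (auto simp: f(3))
  show "0 \<le> Lcut f kk"
    unfolding Lcut_def using tail by (rule suminf_nonneg) (simp add: f(3))
  show "Lcut f kk \<le> 1"
    unfolding Lcut_def f(2)[symmetric] by (intro suminf_le tail f(1)) (simp add: f(3))
qed

text \<open>Every summand of \<open>phi\<close> divides by \<open>k * L\<close>, so with \<open>x / 0 = 0\<close> a positive \<open>phi\<close>
  forces \<open>L \<noteq> 0\<close>.\<close>
lemma phi_at_zero_links [simp]: "phi g 0 p2 = 0"
  unfolding phi_def by simp

lemma phi_eq_factor: "phi g L p2 = (1 - p2) * phi g L 0"
  unfolding phi_def by simp

lemma Gamma_pos:
  assumes g: "is_degree_dist g" and L: "0 < L" "L \<le> 1"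
  shows "0 < Gamma g L"
proof -
  have gs: "summable g" and g0: "\<And>k. 0 \<le> g k" and gz: "g 0 = 0" and g1: "suminf g = 1"
    using g unfolding is_degree_dist_def by (auto simp: sums_iff)
  have ps: "summable (\<lambda>k. g k * (1 - L) ^ k)"
    by (rule summable_comparison_test'[OF gs, of 0])
       (use g0 L in \<open>auto simp: abs_mult intro!: mult_right_le_one_le power_le_one\<close>)
  have reached_summable: "summable (\<lambda>k. g k * (1 - (1 - L) ^ k))"
    using summable_diff[OF gs ps] by (simp add: algebra_simps)
  obtain i where gi: "0 < g i"
    using suminf_pos_iff[OF gs g0] g1 by auto
  with gz have "i \<noteq> 0" by (cases i) auto
  with L have "(1 - L) ^ i < 1" by (simp add: power_less_one_iff)
  with gi have "0 < g i * (1 - (1 - L) ^ i)" by simp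
  moreover have "\<And>k. 0 \<le> g k * (1 - (1 - L) ^ k)"
    using g0 L by (simp add: power_le_one)
  ultimately have "0 < (\<Sum>k. g k * (1 - (1 - L) ^ k))"
    using suminf_pos_iff[OF reached_summable] by blast
  also have "\<dots> = suminf g - (\<Sum>k. g k * (1 - L) ^ k)"
    using suminf_diff[OF gs ps] by (simp add: algebra_simps)
  finally show ?thesis unfolding Gamma_def g1 .
qed

lemma Gamma_Lcut_pos_if_feasible:
  assumes "is_degree_dist f" "is_degree_dist g" "feasible f g p2 kk"
  shows "0 < Gamma g (Lcut f kk)"
proof -
  have "Lcut f kk \<noteq> 0"
    using assms(3) unfolding feasible_def by auto
  then show ?thesis
    using assms(1,2) Lcut_bounds by (intro Gamma_pos) (auto simp: order_le_less)
qed

lemma profit_eq: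
  assumes "p2 \<noteq> 1"
  shows "profit beta c f g p2 kk = (1 - beta)
    + beta * Gamma g (Lcut f kk) * (p2 * (1 - p2) - c / (real kk * phi g (Lcut f kk) 0))"
proof -
  define S where "S = phi g (Lcut f kk) 0"
  have "c / (real kk * ((1 - p2) * S)) * (1 - p2) = ((1 - p2) * c) / ((1 - p2) * (real kk * S))"
    by (simp add: ac_simps)
  also have "\<dots> = c / (real kk * S)"
    using assms by (intro nonzero_mult_divide_mult_cancel_left) simp
  finally have cost: "(p2 - c / (real kk * ((1 - p2) * S))) * (1 - p2) = p2 * (1 - p2) - c / (real kk * S)"
    by (simp add: left_diff_distrib)
  have "profit beta c f g p2 kk
      = (1 - beta) + beta * Gamma g (Lcut f kk) * ((p2 - c / (real kk * ((1 - p2) * S))) * (1 - p2))"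
    unfolding profit_def phi_eq_factor[of _ _ p2] S_def by (simp only: ac_simps)
  also have "\<dots> = (1 - beta) + beta * Gamma g (Lcut f kk) * (p2 * (1 - p2) - c / (real kk * S))"
    by (simp only: cost)
  finally show ?thesis
    unfolding S_def .
qed

lemma profit_at_half:
  "profit beta c f g (1/2) kk = (1 - beta) + beta *
    (Gamma g (Lcut f kk) / 4 - c * Gamma g (Lcut f kk) / (2 * real kk * phi g (Lcut f kk) (1/2)))"
  unfolding profit_def by (simp add: field_simps)

lemma feasible_at_half:
  assumes "feasible f g p2 kk"
  shows "feasible f g (1/2) kk"
  using assms unfolding feasible_def phi_eq_factor[of _ _ p2] phi_eq_factor[of _ _ "1/2"]
  by (auto simp: zero_less_mult_iff)

lemma profit_lt_profit_at_half:
  assumes beta: "0 < beta" and f: "is_degree_dist f" and g: "is_degree_dist g"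
    and feas: "feasible f g p2 kk" and p2: "p2 \<noteq> 1/2"
  shows "profit beta c f g p2 kk < profit beta c f g (1/2) kk"
proof -
  have "p2 \<noteq> 1"
    using feas unfolding feasible_def phi_eq_factor[of _ _ p2] by auto
  have "0 < (p2 - 1/2)\<^sup>2"
    using p2 by simp
  then have "p2 * (1 - p2) < 1/2 * (1 - 1/2)"
    by (simp add: power2_eq_square algebra_simps)
  then have "beta * Gamma g (Lcut f kk) * (p2 * (1 - p2) - c / (real kk * phi g (Lcut f kk) 0))
      < beta * Gamma g (Lcut f kk) * (1/2 * (1 - 1/2) - c / (real kk * phi g (Lcut f kk) 0))"
    using beta Gamma_Lcut_pos_if_feasible[OF f g feas] by (intro mult_strict_left_mono) simp_all
  moreover have "(1/2::real) \<noteq> 1"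
    by simp
  ultimately show ?thesis
    unfolding profit_eq[OF \<open>p2 \<noteq> 1\<close>] profit_eq[OF \<open>1/2 \<noteq> 1\<close>] by simp
qed

theorem proposition1:
  fixes f g :: "nat \<Rightarrow> real" and beta c :: real and p2s :: real and ks :: nat
  assumes beta: "0 < beta" "beta < 1"
    and c: "0 < c"
    and f: "is_degree_dist f" and g: "is_degree_dist g"
    and fmean: "summable (\<lambda>k. real k * f k)" and gmean: "summable (\<lambda>k. real k * g k)"
    and balance: "(1 - beta) * (\<Sum>k. real k * f k) = beta * (\<Sum>k. real k * g k)"
    and sol_feas: "feasible f g p2s ks"
    and sol_opt: "\<forall>p2 kk. feasible f g p2 kk \<longrightarrow> profit beta c f g p2 kk \<le> profit beta c f g p2s ks"
  shows "p2s = 1/2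
    \<and> bonus c f g p2s ks = c / (real ks * phi g (Lcut f ks) p2s)
    \<and> (\<forall>kk. feasible f g (1/2) kk \<longrightarrow>
          Gamma g (Lcut f kk) / 4 - c * Gamma g (Lcut f kk) / (2 * real kk * phi g (Lcut f kk) (1/2))
          \<le> Gamma g (Lcut f ks) / 4 - c * Gamma g (Lcut f ks) / (2 * real ks * phi g (Lcut f ks) (1/2)))"
proof -
  have price: "p2s = 1/2"
  proof (rule ccontr)
    assume "p2s \<noteq> 1/2"
    then have "profit beta c f g p2s ks < profit beta c f g (1/2) ks"
      using profit_lt_profit_at_half[OF beta(1) f g sol_feas] by blast
    with sol_opt feasible_at_half[OF sol_feas] show False by force
  qed
  have "\<forall>kk. feasible f g (1/2) kk \<longrightarrow> profit beta c f g (1/2) kk \<le> profit beta c f g (1/2) ks"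
    using sol_opt price by blast
  then have cutoff: "\<forall>kk. feasible f g (1/2) kk \<longrightarrow>
          Gamma g (Lcut f kk) / 4 - c * Gamma g (Lcut f kk) / (2 * real kk * phi g (Lcut f kk) (1/2))
          \<le> Gamma g (Lcut f ks) / 4 - c * Gamma g (Lcut f ks) / (2 * real ks * phi g (Lcut f ks) (1/2))"
    unfolding profit_at_half using beta(1) by simp
  show ?thesis
    using price cutoff unfolding bonus_def by simp
qed

end
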